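(* Let $(G,\precsim)$ be a compatible quasi-ordered abelian group and let $G^o$ be its set of o-type elements. Then $G^o$ is an initial segment of $G$ and a subgroup of $G$; in particular $(G^o,\precsim)$ is an ordered abelian group.
   Context: A compatible quasi-ordered abelian group is an abelian group $G$ with a total quasi-order $\precsim$ (reflexive, transitive, any two elements comparable) such that, writing $a\sim b$ for $a\precsim b\wedge b\precsim a$: $(Q_1)$ $x\sim0\Rightarrow x=0$; $(Q_2)$ $x\precsim y\wedge y\not\sim z\Rightarrow x+z\precsim y+z$, for all $x,y,z$. With $cl(g)$ the $\sim$-class of $g$, an element $g$ is o-type if $cl(g)=\{g\}$ and $g$ is not of order $2$. A set $S$ is an initial segment if $s\in S$, $a\precsim s$ imply $a\in S$. An ordered abelian group is a group with a total order $\le$ such that $x\le y\Rightarrow x+z\le y+z$. *)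

theory Defs
  imports Main
begin

definition qsim :: "('a \<Rightarrow> 'a \<Rightarrow> bool) \<Rightarrow> 'a \<Rightarrow> 'a \<Rightarrow> bool" where
  "qsim le a b \<longleftrightarrow> le a b \<and> le b a"

definition total_quasi_order :: "('a \<Rightarrow> 'a \<Rightarrow> bool) \<Rightarrow> bool" where
  "total_quasi_order le \<longleftrightarrow>
     (\<forall>x. le x x) \<and> (\<forall>x y z. le x y \<longrightarrow> le y z \<longrightarrow> le x z) \<and> (\<forall>x y. le x y \<or> le y x)"

definition cqo_group :: "('a::ab_group_add \<Rightarrow> 'a \<Rightarrow> bool) \<Rightarrow> bool" where
  "cqo_group le \<longleftrightarrow> total_quasi_order le
     \<and> (\<forall>x. qsim le x 0 \<longrightarrow> x = 0)
     \<and> (\<forall>x y z. le x y \<and> \<not> qsim le y z \<longrightarrow> le (x + z) (y + z))"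

definition qclass :: "('a \<Rightarrow> 'a \<Rightarrow> bool) \<Rightarrow> 'a \<Rightarrow> 'a set" where
  "qclass le g = {h. qsim le h g}"

definition order_two :: "'a::ab_group_add \<Rightarrow> bool" where
  "order_two g \<longleftrightarrow> g \<noteq> 0 \<and> g + g = 0"

definition o_type :: "('a::ab_group_add \<Rightarrow> 'a \<Rightarrow> bool) \<Rightarrow> 'a \<Rightarrow> bool" where
  "o_type le g \<longleftrightarrow> qclass le g = {g} \<and> \<not> order_two g"

definition o_type_set :: "('a::ab_group_add \<Rightarrow> 'a \<Rightarrow> bool) \<Rightarrow> 'a set" where
  "o_type_set le = {g. o_type le g}"

definition initial_segment :: "('a \<Rightarrow> 'a \<Rightarrow> bool) \<Rightarrow> 'a set \<Rightarrow> bool" where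
  "initial_segment le S \<longleftrightarrow> (\<forall>s\<in>S. \<forall>a. le a s \<longrightarrow> a \<in> S)"

definition add_subgroup :: "'a::ab_group_add set \<Rightarrow> bool" where
  "add_subgroup S \<longleftrightarrow> 0 \<in> S \<and> (\<forall>x\<in>S. \<forall>y\<in>S. x + y \<in> S) \<and> (\<forall>x\<in>S. - x \<in> S)"

definition ordered_ab_group_on :: "'a::ab_group_add set \<Rightarrow> ('a \<Rightarrow> 'a \<Rightarrow> bool) \<Rightarrow> bool" where
  "ordered_ab_group_on S le \<longleftrightarrow> add_subgroup S
     \<and> (\<forall>x\<in>S. le x x)
     \<and> (\<forall>x\<in>S. \<forall>y\<in>S. \<forall>z\<in>S. le x y \<longrightarrow> le y z \<longrightarrow> le x z)
     \<and> (\<forall>x\<in>S. \<forall>y\<in>S. le x y \<longrightarrow> le y x \<longrightarrow> x = y)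
     \<and> (\<forall>x\<in>S. \<forall>y\<in>S. le x y \<or> le y x)
     \<and> (\<forall>x\<in>S. \<forall>y\<in>S. \<forall>z\<in>S. le x y \<longrightarrow> le (x + z) (y + z))"

end

theory Submission
  imports Defs
begin

text \<open>An element g is o-type exactly when g = 0 or g is not equivalent to -g; such an element
g \<noteq> 0 is alone in its class, because h \<sim> g forces h - g \<precsim> 0 \<precsim> h - g by (Q2) with z = -g.
Elements a \<noteq> 0 with a \<sim> -a are strictly positive. If such an a lay below an o-type s, then
translating by a and back by -a, which is equivalent to a, gives s \<precsim> s + a \<precsim> s with s + a again
o-type; so s + a = s and a = 0. Closure under sums reduces, after possibly negating both summands,
to a sum with a non-positive summand, which lies below the other summand.\<close>

locale compatible_qo_group =
  fixes le :: "'a::ab_group_add \<Rightarrow> 'a \<Rightarrow> bool" (infix "\<precsim>" 50)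
  assumes cqo: "cqo_group le"
begin

abbreviation sim :: "'a \<Rightarrow> 'a \<Rightarrow> bool" (infix "\<sim>" 50) where
  "x \<sim> y \<equiv> qsim le x y"

lemma quasi_refl: "x \<precsim> x"
  using cqo unfolding cqo_group_def total_quasi_order_def by blast

lemma quasi_trans: "x \<precsim> y \<Longrightarrow> y \<precsim> z \<Longrightarrow> x \<precsim> z"
  using cqo unfolding cqo_group_def total_quasi_order_def by blast

lemma quasi_total: "x \<precsim> y \<or> y \<precsim> x"
  using cqo unfolding cqo_group_def total_quasi_order_def by blast

lemma antisym_zero: "x \<precsim> 0 \<Longrightarrow> 0 \<precsim> x \<Longrightarrow> x = 0"
  using cqo unfolding cqo_group_def qsim_def by blast

lemma add_right_mono_not_sim: "x \<precsim> y \<Longrightarrow> \<not> y \<sim> z \<Longrightarrow> x + z \<precsim> y + z"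
  using cqo unfolding cqo_group_def by blast

lemma not_sim_zero: "x \<noteq> 0 \<Longrightarrow> \<not> 0 \<sim> x"
  using antisym_zero unfolding qsim_def by blast

lemma nonpos_imp_neg_nonneg:
  assumes "x \<precsim> 0"
  shows "0 \<precsim> - x"
proof (cases "x = 0")
  case True
  then show ?thesis using quasi_refl by simp
next
  case False
  then have "\<not> 0 \<sim> - x" using not_sim_zero by simp
  from add_right_mono_not_sim[OF assms this] show ?thesis by simp
qed

lemma nonneg_imp_neg_nonpos: "0 \<precsim> x \<Longrightarrow> \<not> x \<sim> - x \<Longrightarrow> - x \<precsim> 0"
  using add_right_mono_not_sim[of 0 x "- x"] by simp

lemma sim_eq_if_not_sim_neg:
  assumes g: "\<not> g \<sim> - g" and hg: "h \<sim> g"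
  shows "h = g"
proof -
  have "h + - g \<precsim> g + - g"
    using add_right_mono_not_sim[of h g "- g"] g hg unfolding qsim_def by blast
  moreover have "\<not> h \<sim> - g"
    using g hg quasi_trans unfolding qsim_def by blast
  then have "g + - g \<precsim> h + - g"
    using add_right_mono_not_sim[of g h "- g"] hg unfolding qsim_def by blast
  ultimately show ?thesis using antisym_zero[of "h - g"] by simp
qed

lemma o_type_iff: "o_type le g \<longleftrightarrow> g = 0 \<or> \<not> g \<sim> - g"
proof
  assume o: "o_type le g"
  show "g = 0 \<or> \<not> g \<sim> - g"
  proof (rule ccontr)
    assume "\<not> (g = 0 \<or> \<not> g \<sim> - g)"
    then have "g \<noteq> 0" and "- g \<in> qclass le g"
      unfolding qclass_def qsim_def by auto
    then have "order_two g"
      using o unfolding o_type_def order_two_def by (auto simp: add_eq_0_iff)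
    then show False using o unfolding o_type_def by blast
  qed
next
  assume g: "g = 0 \<or> \<not> g \<sim> - g"
  have "qclass le g = {g}"
    using g not_sim_zero sim_eq_if_not_sim_neg quasi_refl
    unfolding qclass_def qsim_def by auto
  moreover have "\<not> order_two g"
    using g quasi_refl unfolding order_two_def qsim_def by (auto simp: add_eq_0_iff)
  ultimately show "o_type le g" unfolding o_type_def by blast
qed

lemma o_type_zero: "o_type le 0"
  by (simp add: o_type_iff)

lemma o_type_neg: "o_type le g \<Longrightarrow> o_type le (- g)"
  unfolding o_type_iff qsim_def by auto

lemma not_o_type_pos:
  assumes "\<not> o_type le a"
  shows "\<not> a \<precsim> 0"
proof
  assume "a \<precsim> 0"
  moreover from assms have "a \<noteq> 0" and "- a \<precsim> a"
    unfolding o_type_iff qsim_def by auto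
  ultimately show False
    using nonpos_imp_neg_nonneg antisym_zero quasi_trans by blast
qed

lemma translate_by_sim_neg:
  assumes s: "\<not> s \<sim> - s" and a: "a \<sim> - a" and "0 \<precsim> a" and "a \<precsim> s"
  shows "s \<precsim> s + a" and "\<not> s + a \<sim> - (s + a)"
proof -
  have "\<not> a \<sim> s"
    using sim_eq_if_not_sim_neg[OF s] s a by blast
  then show ss: "s \<precsim> s + a"
    using add_right_mono_not_sim[OF \<open>0 \<precsim> a\<close>, of s] unfolding qsim_def
    by (simp add: add.commute)
  have "- a \<precsim> s"
    using a \<open>a \<precsim> s\<close> quasi_trans unfolding qsim_def by blast
  then have "- (s + a) \<precsim> 0"
    using add_right_mono_not_sim[OF _ s] by (simp add: algebra_simps)
  moreover have "\<not> s + a \<precsim> 0"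
  proof
    assume "s + a \<precsim> 0"
    then have "s = 0"
      using ss \<open>0 \<precsim> a\<close> \<open>a \<precsim> s\<close> antisym_zero quasi_trans by blast
    then show False using s quasi_refl unfolding qsim_def by simp
  qed
  ultimately show "\<not> s + a \<sim> - (s + a)"
    using quasi_trans unfolding qsim_def by blast
qed

lemma o_type_initial:
  assumes s: "o_type le s" and as: "a \<precsim> s"
  shows "o_type le a"
proof (rule ccontr)
  assume na: "\<not> o_type le a"
  then have "a \<noteq> 0" and a: "a \<sim> - a"
    unfolding o_type_iff by auto
  have "\<not> a \<precsim> 0" using not_o_type_pos[OF na] .
  then have pos: "0 \<precsim> a" using quasi_total by blast
  have "s \<noteq> 0"
    using \<open>\<not> a \<precsim> 0\<close> as by blast
  then have s_nsim: "\<not> s \<sim> - s" using s o_type_iff by blast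
  define t where "t = s + a"
  have "s \<precsim> t" and t: "\<not> t \<sim> - t"
    using translate_by_sim_neg[OF s_nsim a pos as] unfolding t_def by blast+
  have "- a \<sim> - (- a)" and "0 \<precsim> - a"
    using a pos quasi_trans unfolding qsim_def by auto
  moreover have "- a \<precsim> t"
    using a as \<open>s \<precsim> t\<close> quasi_trans unfolding qsim_def by blast
  ultimately have "t \<precsim> t + - a"
    using translate_by_sim_neg(1)[OF t] by blast
  then have "s \<sim> t"
    using \<open>s \<precsim> t\<close> unfolding t_def qsim_def by simp
  then have "s = t" using sim_eq_if_not_sim_neg[OF t] by blast
  then show False using \<open>a \<noteq> 0\<close> unfolding t_def by simp
qed

lemma o_type_add_nonpos:
  assumes "x \<precsim> 0" and y: "o_type le y"
  shows "o_type le (x + y)"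
proof (cases "y = 0")
  case True
  then show ?thesis using assms o_type_zero o_type_initial by simp
next
  case False
  then have "x + y \<precsim> 0 + y"
    using add_right_mono_not_sim[OF \<open>x \<precsim> 0\<close>] not_sim_zero by blast
  then show ?thesis using o_type_initial[OF y] by simp
qed

lemma o_type_add:
  assumes x: "o_type le x" and y: "o_type le y"
  shows "o_type le (x + y)"
proof -
  consider "x \<precsim> 0" | "y \<precsim> 0" | "\<not> x \<precsim> 0" "\<not> y \<precsim> 0" by blast
  then show ?thesis
  proof cases
    case 1
    then show ?thesis using o_type_add_nonpos y by blast
  next
    case 2
    then have "o_type le (y + x)" using o_type_add_nonpos x by blast
    then show ?thesis by (simp add: add.commute)
  next
    case 3
    then have "x \<noteq> 0" and "0 \<precsim> x" and "0 \<precsim> y"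
      using quasi_refl quasi_total by blast+
    then have "- x \<precsim> 0"
      using nonneg_imp_neg_nonpos x o_type_iff by blast
    then have "o_type le (- x + - y)"
      using o_type_add_nonpos o_type_neg[OF y] by blast
    from o_type_neg[OF this] show ?thesis by (simp add: add.commute)
  qed
qed

lemma add_subgroup_o_type_set: "add_subgroup (o_type_set le)"
  unfolding add_subgroup_def o_type_set_def
  using o_type_zero o_type_add o_type_neg by blast

lemma o_type_add_right_mono:
  assumes "x \<precsim> y" and y: "o_type le y" and z: "o_type le z"
  shows "x + z \<precsim> y + z"
proof (cases "y \<sim> z")
  case False
  then show ?thesis using add_right_mono_not_sim[OF \<open>x \<precsim> y\<close>] by blast
next
  case True
  then have "z = y"
    using y z unfolding o_type_def qclass_def qsim_def by blast
  show ?thesis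
  proof (cases "y = 0")
    case True
    then show ?thesis using \<open>x \<precsim> y\<close> \<open>z = y\<close> by simp
  next
    case False
    have "\<not> y \<sim> - y" using y False o_type_iff by blast
    have "y + y \<noteq> 0" using y False unfolding o_type_def order_two_def by blast
    then have "x - y \<precsim> 0"
      using add_right_mono_not_sim[OF \<open>x \<precsim> y\<close> \<open>\<not> y \<sim> - y\<close>] by simp
    then have "x - y + (y + y) \<precsim> 0 + (y + y)"
      using add_right_mono_not_sim not_sim_zero[OF \<open>y + y \<noteq> 0\<close>] by blast
    then show ?thesis using \<open>z = y\<close> by (simp add: algebra_simps)
  qed
qed

lemma ordered_ab_group_on_o_type_set: "ordered_ab_group_on (o_type_set le) le"
  unfolding ordered_ab_group_on_def
proof (intro conjI add_subgroup_o_type_set ballI impI)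
  fix x y
  assume "x \<in> o_type_set le" "x \<precsim> y" "y \<precsim> x"
  moreover have "y \<in> qclass le x"
    using \<open>x \<precsim> y\<close> \<open>y \<precsim> x\<close> unfolding qclass_def qsim_def by blast
  ultimately show "x = y"
    unfolding o_type_set_def o_type_def by auto
next
  fix x y z
  assume "y \<in> o_type_set le" "z \<in> o_type_set le" "x \<precsim> y"
  then show "x + z \<precsim> y + z"
    using o_type_add_right_mono unfolding o_type_set_def by blast
qed (use quasi_refl quasi_trans quasi_total in blast)+

end

theorem mainTheorem6:
  fixes le :: "'a::ab_group_add \<Rightarrow> 'a \<Rightarrow> bool"
  assumes "cqo_group le"
  shows "initial_segment le (o_type_set le) \<and> add_subgroup (o_type_set le)
         \<and> ordered_ab_group_on (o_type_set le) le"
proof -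
  interpret compatible_qo_group le by (rule compatible_qo_group.intro) (rule assms)
  have "initial_segment le (o_type_set le)"
    unfolding initial_segment_def o_type_set_def using o_type_initial by blast
  then show ?thesis
    using add_subgroup_o_type_set ordered_ab_group_on_o_type_set by blast
qed

end
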